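(* Let $m\ge 2$ and let $(v_1,\dots,v_k)$ and $(w_1,\dots,w_l)$ be mutually unbiased equiangular tight frames for $\mathbb{R}^m$, with $V\in\mathbb{R}^{m\times k}$ and $W\in\mathbb{R}^{m\times l}$ the matrices with these vectors as columns. For integers $n\ge m$ put $\delta_{m,n}:=\frac{m}{n}\left(1+\sqrt{\frac{(n-1)(n-m)}{m}}\right)$, and let $$\gamma_{m,k,l}=\frac{m-\delta_{m,k}\delta_{m,l}}{2\sqrt m-\delta_{m,k}-\delta_{m,l}},$$ and let $\theta\in[0,\pi/2]$ be given by $\cos(2\theta)=\frac{\delta_{m,k}-\delta_{m,l}}{2\sqrt m-\delta_{m,k}-\delta_{m,l}}$. Define, in block form, $$t_\theta:=\begin{bmatrix}\frac{\cos\theta}{\sqrt k}\mathbb{1}_k\\ \frac{\sin\theta}{\sqrt l}\mathbb{1}_l\end{bmatrix}\in\mathbb{R}^{k+l},\qquad U_\theta:=\begin{bmatrix}\cos\theta\sqrt{\tfrac{m}{k}}\,V & \sin\theta\sqrt{\tfrac{m}{l}}\,W\end{bmatrix}\in\mathbb{R}^{m\times(k+l)},$$ and $T_\theta:=\mathrm{diag}[t_\theta]$. Then $$|U_\theta^\top U_\theta|\,t_\theta=\gamma_{m,k,l}\,t_\theta\qquad\text{and}\qquad T_\theta\,\mathrm{sgn}(U_\theta^\top U_\theta)\,T_\theta\,U_\theta^\top=\frac{\gamma_{m,k,l}}{m}\,U_\theta^\top.$$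
   Context: $\mathbb{1}_n$ denotes the all-ones vector in $\mathbb{R}^n$; $|A|$ and $\mathrm{sgn}(A)$ denote the entrywise absolute value and entrywise sign of a matrix $A$. A system of unit vectors $(v_1,\dots,v_n)$ in $\mathbb{R}^m$ is an equiangular tight frame if $|\langle v_i,v_j\rangle|$ is the same constant for all $i\ne j$ and $VV^\top=\frac{n}{m}\mathrm{I}_m$, where $V$ has columns $v_i$. Two equiangular tight frames $(v_1,\dots,v_k)$, $(w_1,\dots,w_l)$ for $\mathbb{R}^m$ are mutually unbiased if $|\langle v_i,w_j\rangle|$ is the same constant for all $i,j$. *)

theory Defs
  imports "HOL-Analysis.Analysis"
begin

text \<open>Matrices are Cartesian: a real m x k matrix is of type real^'k^'m
  (rows indexed by 'm, columns by 'k). The frame vectors are the columns.\<close>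

definition is_ETF :: "real^'k^'m \<Rightarrow> bool" where
  "is_ETF V \<longleftrightarrow>
     (\<forall>j. norm (column j V) = 1) \<and>
     (\<exists>c. \<forall>i j. i \<noteq> j \<longrightarrow> \<bar>column i V \<bullet> column j V\<bar> = c) \<and>
     V ** transpose V = (real CARD('k) / real CARD('m)) *\<^sub>R mat 1"

definition mutually_unbiased :: "real^'k^'m \<Rightarrow> real^'l^'m \<Rightarrow> bool" where
  "mutually_unbiased V W \<longleftrightarrow>
     (\<exists>c. \<forall>i j. \<bar>column i V \<bullet> column j W\<bar> = c)"

definition delta :: "nat \<Rightarrow> nat \<Rightarrow> real" where
  "delta m n = (real m / real n) *
     (1 + sqrt ((real n - 1) * (real n - real m) / real m))"

definition gamma :: "nat \<Rightarrow> nat \<Rightarrow> nat \<Rightarrow> real" where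
  "gamma m k l = (real m - delta m k * delta m l) /
     (2 * sqrt (real m) - delta m k - delta m l)"

definition mat_abs :: "real^'n^'m \<Rightarrow> real^'n^'m" where
  "mat_abs A = (\<chi> i j. \<bar>A $ i $ j\<bar>)"

definition mat_sgn :: "real^'n^'m \<Rightarrow> real^'n^'m" where
  "mat_sgn A = (\<chi> i j. sgn (A $ i $ j))"

definition diag_mat :: "real^'n \<Rightarrow> real^'n^'n" where
  "diag_mat t = (\<chi> i j. if i = j then t $ i else 0)"

definition t_theta :: "real \<Rightarrow> real^('k::finite + 'l::finite)" where
  "t_theta \<theta> = (\<chi> x. case x of
       Inl _ \<Rightarrow> cos \<theta> / sqrt (real CARD('k))
     | Inr _ \<Rightarrow> sin \<theta> / sqrt (real CARD('l)))"

definition U_theta :: "real \<Rightarrow> real^('k::finite)^('m::finite) \<Rightarrow> real^'l^'m \<Rightarrow> real^('k + 'l)^'m" where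
  "U_theta \<theta> V W = (\<chi> i x. case x of
       Inl j \<Rightarrow> cos \<theta> * sqrt (real CARD('m) / real CARD('k)) * V $ i $ j
     | Inr j \<Rightarrow> sin \<theta> * sqrt (real CARD('m) / real CARD('l)) * W $ i $ j)"

end

theory Submission
  imports Defs
begin

(* Let Y = [V W] be the concatenated frame. Then U_theta = sqrt m * Y * diag t_theta with t_theta
   entrywise positive, so |U^T U| and sgn (U^T U) are |Y^T Y| and sgn (Y^T Y) rescaled by that
   diagonal, and both claims reduce to two facts about Y. First, every column y of Y is sign
   balanced against V and against W: sum_q sgn <y, x_q> x_q = (sum_q |<y, x_q>|) y. For two columns
   of one ETF this holds because off the diagonal sgn (V^T V) is a multiple of V^T V and V V^T is a
   multiple of the identity; across the two frames because sgn <v, w> = sqrt m <v, w>. Second, the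
   rows of |Y^T Y| weighted by t_theta^2 all sum to gamma / m: the Welch identity
   1 + (k - 1) c^2 = k / m turns the ETF row sum 1 + (k - 1) c into (k / m) delta_{m,k}, and theta
   is chosen exactly so that the two block row sums cos^2 delta_k + sin^2 sqrt m and
   cos^2 sqrt m + sin^2 delta_l coincide. Since delta_{m,n} < sqrt m for m >= 2, theta lies strictly
   between 0 and pi/2, which makes t_theta positive. *)

section \<open>Tight frames and equiangular tight frames\<close>

lemma tight_frame_expansion:
  fixes V :: "real^'k^'m"
  assumes "V ** transpose V = a *\<^sub>R mat 1"
  shows "(\<Sum>q\<in>UNIV. (x \<bullet> column q V) *\<^sub>R column q V) = a *\<^sub>R x"
proof -
  have "(\<Sum>q\<in>UNIV. (x \<bullet> column q V) *\<^sub>R column q V) = V *v (transpose V *v x)"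
    by (simp add: matrix_mult_sum scalar_mult_eq_scaleR matrix_vector_mul_component
        transpose_def column_def inner_vec_def mult.commute)
  also have "\<dots> = a *\<^sub>R x"
    by (simp add: matrix_vector_mul_assoc assms scaleR_matrix_vector_assoc[symmetric]
        del: transpose_matrix_vector)
  finally show ?thesis .
qed

lemma tight_frame_sum_inner_sq:
  fixes V :: "real^'k^'m"
  assumes "V ** transpose V = a *\<^sub>R mat 1"
  shows "(\<Sum>q\<in>UNIV. (x \<bullet> column q V)\<^sup>2) = a * (x \<bullet> x)"
proof -
  have "(\<Sum>q\<in>UNIV. (x \<bullet> column q V)\<^sup>2) = x \<bullet> (\<Sum>q\<in>UNIV. (x \<bullet> column q V) *\<^sub>R column q V)"
    by (simp add: inner_sum_right power2_eq_square)
  then show ?thesis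
    by (simp add: tight_frame_expansion[OF assms])
qed

lemma ETF_inner_column_self:
  "is_ETF V \<Longrightarrow> column j V \<bullet> column j V = 1"
  unfolding is_ETF_def by (simp add: norm_eq_1)

lemma ETF_tight:
  "is_ETF (V :: real^'k^'m) \<Longrightarrow> V ** transpose V = (real CARD('k) / real CARD('m)) *\<^sub>R mat 1"
  unfolding is_ETF_def by blast

lemma ETF_Welch_identity:
  fixes V :: "real^'k^'m"
  assumes "is_ETF V"
  obtains c where "0 \<le> c" and "\<And>p q. p \<noteq> q \<Longrightarrow> \<bar>column p V \<bullet> column q V\<bar> = c"
    and "1 + (real CARD('k) - 1) * c\<^sup>2 = real CARD('k) / real CARD('m)"
proof -
  obtain c0 where c0: "\<forall>p q. p \<noteq> q \<longrightarrow> \<bar>column p V \<bullet> column q V\<bar> = c0"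
    using assms unfolding is_ETF_def by blast
  \<comment> \<open>with a single column c0 is unconstrained, hence the absolute value\<close>
  define c where "c = \<bar>c0\<bar>"
  have offdiag: "\<bar>column p V \<bullet> column q V\<bar> = c" if "p \<noteq> q" for p q
    using c0 that unfolding c_def by (metis abs_idempotent)
  fix p :: 'k
  have "real CARD('k) / real CARD('m) = (\<Sum>q\<in>UNIV. (column p V \<bullet> column q V)\<^sup>2)"
    using tight_frame_sum_inner_sq[OF ETF_tight[OF assms], of "column p V"]
    by (simp add: ETF_inner_column_self[OF assms])
  also have "\<dots> = 1 + (\<Sum>q\<in>UNIV - {p}. (column p V \<bullet> column q V)\<^sup>2)"
    by (simp add: sum.remove[of UNIV p] ETF_inner_column_self[OF assms])
  also have "\<dots> = 1 + (\<Sum>q\<in>UNIV - {p}. c\<^sup>2)"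
    by (intro arg_cong2[where f = "(+)"] sum.cong refl) (metis offdiag power2_abs DiffD2 singletonI)
  also have "\<dots> = 1 + (real CARD('k) - 1) * c\<^sup>2"
    by (simp add: of_nat_diff)
  finally show thesis
    using that[of c] offdiag unfolding c_def by simp
qed

lemma ETF_card_le:
  fixes V :: "real^'k^'m"
  assumes "is_ETF V"
  shows "CARD('m) \<le> CARD('k)"
proof -
  obtain c where "1 + (real CARD('k) - 1) * c\<^sup>2 = real CARD('k) / real CARD('m)"
    using ETF_Welch_identity[OF assms] by metis
  moreover have "0 \<le> (real CARD('k) - 1) * c\<^sup>2"
    using zero_less_card_finite[where 'a = 'k] by (intro mult_nonneg_nonneg) simp_all
  ultimately have "1 \<le> real CARD('k) / real CARD('m)"
    by linarith
  then show ?thesis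
    by (simp add: field_simps)
qed

lemma ETF_sum_abs_inner_coherence:
  fixes V :: "real^'k^'m"
  assumes "is_ETF V" and offdiag: "\<And>p q. p \<noteq> q \<Longrightarrow> \<bar>column p V \<bullet> column q V\<bar> = c"
  shows "(\<Sum>q\<in>UNIV. \<bar>column p V \<bullet> column q V\<bar>) = 1 + (real CARD('k) - 1) * c"
proof -
  have "(\<Sum>q\<in>UNIV. \<bar>column p V \<bullet> column q V\<bar>) = 1 + (\<Sum>q\<in>UNIV - {p}. \<bar>column p V \<bullet> column q V\<bar>)"
    by (simp add: sum.remove[of UNIV p] ETF_inner_column_self[OF assms(1)])
  also have "\<dots> = 1 + (\<Sum>q\<in>UNIV - {p}. c)"
    by (intro arg_cong2[where f = "(+)"] sum.cong refl) (simp add: offdiag)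
  also have "\<dots> = 1 + (real CARD('k) - 1) * c"
    by (simp add: of_nat_diff)
  finally show ?thesis .
qed

lemma ETF_sum_abs_inner:
  fixes V :: "real^'k^'m"
  assumes "is_ETF V"
  shows "(\<Sum>q\<in>UNIV. \<bar>column p V \<bullet> column q V\<bar>) = real CARD('k) / real CARD('m) * delta CARD('m) CARD('k)"
proof -
  let ?k = "real CARD('k)" and ?m = "real CARD('m)"
  obtain c where c0: "0 \<le> c" and offdiag: "\<And>p q. p \<noteq> q \<Longrightarrow> \<bar>column p V \<bullet> column q V\<bar> = c"
    and Welch: "1 + (?k - 1) * c\<^sup>2 = ?k / ?m"
    using ETF_Welch_identity[OF assms] by metis
  have sum_eq: "(\<Sum>q\<in>UNIV. \<bar>column p V \<bullet> column q V\<bar>) = 1 + (?k - 1) * c"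
    using ETF_sum_abs_inner_coherence[OF assms offdiag] .
  have "((?k - 1) * c)\<^sup>2 = (?k - 1) * ((?k - 1) * c\<^sup>2)"
    by (simp add: power2_eq_square)
  also have "(?k - 1) * c\<^sup>2 = (?k - ?m) / ?m"
    using Welch by (simp add: field_simps)
  also have "(?k - 1) * ((?k - ?m) / ?m) = (?k - 1) * (?k - ?m) / ?m"
    by simp
  finally have sq: "((?k - 1) * c)\<^sup>2 = (?k - 1) * (?k - ?m) / ?m" .
  have "0 \<le> (?k - 1) * c"
    using c0 zero_less_card_finite[where 'a = 'k] by (intro mult_nonneg_nonneg) simp_all
  with sq have "sqrt ((?k - 1) * (?k - ?m) / ?m) = (?k - 1) * c"
    by (metis real_sqrt_unique)
  then show ?thesis
    unfolding sum_eq delta_def by simp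
qed

section \<open>Sign balance\<close>

definition sign_balanced :: "real^'m \<Rightarrow> real^'n^'m \<Rightarrow> bool" where
  "sign_balanced x X \<longleftrightarrow>
     (\<Sum>q\<in>UNIV. sgn (x \<bullet> column q X) *\<^sub>R column q X) = (\<Sum>q\<in>UNIV. \<bar>x \<bullet> column q X\<bar>) *\<^sub>R x"

lemma ETF_sum_offdiag_sgn_scaleR_column:
  fixes V :: "real^'k^'m"
  assumes "is_ETF V" and offdiag: "\<And>p q. p \<noteq> q \<Longrightarrow> \<bar>column p V \<bullet> column q V\<bar> = c"
    and Welch: "1 + (real CARD('k) - 1) * c\<^sup>2 = real CARD('k) / real CARD('m)"
  shows "(\<Sum>q\<in>UNIV - {p}. sgn (column p V \<bullet> column q V) *\<^sub>R column q V)
           = ((real CARD('k) - 1) * c) *\<^sub>R column p V" (is "?S = _")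
proof (cases "c = 0")
  case True
  then have "?S = 0"
    using offdiag by (intro sum.neutral ballI) auto
  with True show ?thesis
    by simp
next
  case False
  let ?g = "\<lambda>q. column p V \<bullet> column q V"
  have "(\<Sum>q\<in>UNIV. ?g q *\<^sub>R column q V) = (real CARD('k) / real CARD('m)) *\<^sub>R column p V"
    by (rule tight_frame_expansion[OF ETF_tight[OF assms(1)]])
  then have "(\<Sum>q\<in>UNIV - {p}. ?g q *\<^sub>R column q V) = ((real CARD('k) - 1) * c\<^sup>2) *\<^sub>R column p V"
    by (simp add: sum.remove[of UNIV p] ETF_inner_column_self[OF assms(1)] Welch[symmetric] algebra_simps)
  moreover have "c *\<^sub>R ?S = (\<Sum>q\<in>UNIV - {p}. ?g q *\<^sub>R column q V)"
    unfolding scaleR_sum_right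
    by (intro sum.cong refl) (metis DiffD2 singletonI offdiag sgn_mult_abs scaleR_scaleR mult.commute)
  ultimately have "c *\<^sub>R ?S = c *\<^sub>R (((real CARD('k) - 1) * c) *\<^sub>R column p V)"
    by (simp add: power2_eq_square)
  with False show ?thesis
    by (simp add: scaleR_cancel_left del: scaleR_scaleR)
qed

lemma ETF_sign_balanced:
  fixes V :: "real^'k^'m"
  assumes "is_ETF V"
  shows "sign_balanced (column p V) V"
proof -
  obtain c where offdiag: "\<And>p q. p \<noteq> q \<Longrightarrow> \<bar>column p V \<bullet> column q V\<bar> = c"
    and Welch: "1 + (real CARD('k) - 1) * c\<^sup>2 = real CARD('k) / real CARD('m)"
    using ETF_Welch_identity[OF assms] by metis
  have "(\<Sum>q\<in>UNIV. sgn (column p V \<bullet> column q V) *\<^sub>R column q V)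
      = (1 + (real CARD('k) - 1) * c) *\<^sub>R column p V"
    using ETF_sum_offdiag_sgn_scaleR_column[OF assms offdiag Welch, of p]
    by (simp add: sum.remove[of UNIV p] ETF_inner_column_self[OF assms] algebra_simps)
  then show ?thesis
    by (simp add: sign_balanced_def ETF_sum_abs_inner_coherence[OF assms offdiag])
qed

section \<open>Mutually unbiased frames\<close>

lemma mutually_unbiased_commute:
  "mutually_unbiased V W \<Longrightarrow> mutually_unbiased W V"
  unfolding mutually_unbiased_def by (metis inner_commute)

lemma mutually_unbiased_abs_inner:
  fixes V :: "real^'k^'m" and W :: "real^'l^'m"
  assumes "is_ETF V" and "is_ETF W" and "mutually_unbiased V W"
  shows "\<bar>column p V \<bullet> column q W\<bar> = 1 / sqrt (real CARD('m))"
proof -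
  obtain c where c: "\<And>p q. \<bar>column p V \<bullet> column q W\<bar> = c"
    using assms(3) unfolding mutually_unbiased_def by blast
  have "real CARD('l) / real CARD('m) = (\<Sum>q\<in>UNIV. (column p V \<bullet> column q W)\<^sup>2)"
    using tight_frame_sum_inner_sq[OF ETF_tight[OF assms(2)], of "column p V"]
    by (simp add: ETF_inner_column_self[OF assms(1)])
  also have "\<dots> = (\<Sum>q::'l\<in>UNIV. c\<^sup>2)"
    by (rule sum.cong[OF refl]) (metis c power2_abs)
  also have "\<dots> = real CARD('l) * c\<^sup>2"
    by simp
  finally have "c\<^sup>2 = 1 / real CARD('m)"
    by (simp add: field_simps)
  moreover have "0 \<le> c"
    by (metis c abs_ge_zero)
  ultimately have "c = sqrt (1 / real CARD('m))"
    by (metis real_sqrt_unique)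
  then show ?thesis
    by (simp add: c real_sqrt_divide)
qed

lemma mutually_unbiased_sum_abs_inner:
  fixes V :: "real^'k^'m" and W :: "real^'l^'m"
  assumes "is_ETF V" and "is_ETF W" and "mutually_unbiased V W"
  shows "(\<Sum>q\<in>UNIV. \<bar>column p V \<bullet> column q W\<bar>) = real CARD('l) / sqrt (real CARD('m))"
  by (simp add: mutually_unbiased_abs_inner[OF assms])

lemma mutually_unbiased_sign_balanced:
  fixes V :: "real^'k^'m" and W :: "real^'l^'m"
  assumes "is_ETF V" and "is_ETF W" and "mutually_unbiased V W"
  shows "sign_balanced (column p V) W"
proof -
  let ?r = "sqrt (real CARD('m))"
  have r_pos: "0 < ?r"
    by simp
  have sgn_eq: "sgn (column p V \<bullet> column q W) = ?r * (column p V \<bullet> column q W)" for q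
  proof -
    have "?r * (column p V \<bullet> column q W)
        = ?r * (sgn (column p V \<bullet> column q W) * \<bar>column p V \<bullet> column q W\<bar>)"
      by (simp only: sgn_mult_abs)
    also have "\<dots> = sgn (column p V \<bullet> column q W)"
      using r_pos by (simp add: mutually_unbiased_abs_inner[OF assms])
    finally show ?thesis ..
  qed
  have "(\<Sum>q\<in>UNIV. sgn (column p V \<bullet> column q W) *\<^sub>R column q W)
      = ?r *\<^sub>R (\<Sum>q\<in>UNIV. (column p V \<bullet> column q W) *\<^sub>R column q W)"
    by (simp add: sgn_eq scaleR_sum_right)
  also have "\<dots> = (?r * (real CARD('l) / real CARD('m))) *\<^sub>R column p V"
    by (simp add: tight_frame_expansion[OF ETF_tight[OF assms(2)]])
  also have "?r * (real CARD('l) / real CARD('m)) = real CARD('l) / ?r"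
    using r_pos by (simp add: field_simps)
  finally show ?thesis
    by (simp add: sign_balanced_def mutually_unbiased_sum_abs_inner[OF assms])
qed

section \<open>The parameters delta and theta\<close>

lemma delta_less_sqrt:
  assumes "2 \<le> m" and "m \<le> n"
  shows "delta m n < sqrt (real m)"
proof -
  define r where "r = sqrt (real m)"
  have r1: "1 < r"
    unfolding r_def using assms(1) by simp
  have m_eq: "real m = r\<^sup>2"
    unfolding r_def by simp
  have n_ge: "r\<^sup>2 \<le> real n"
    using assms(2) m_eq by simp
  have "r < r\<^sup>2"
    using r1 by (simp add: power2_eq_square)
  then have n_pos: "0 < real n" and "1 < real n / r"
    using n_ge r1 by simp_all
  have "(real n / r - 1)\<^sup>2 - (real n - 1) * (real n - real m) / real m = real n * (r - 1)\<^sup>2 / r\<^sup>2"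
    unfolding m_eq using r1 by (simp add: field_simps power2_eq_square)
  moreover have "0 < real n * (r - 1)\<^sup>2 / r\<^sup>2"
    using r1 n_pos by simp
  ultimately have "sqrt ((real n - 1) * (real n - real m) / real m) < sqrt ((real n / r - 1)\<^sup>2)"
    by (intro real_sqrt_less_mono) linarith
  also have "\<dots> = real n / r - 1"
    using \<open>1 < real n / r\<close> by simp
  finally have "real m / real n * (1 + sqrt ((real n - 1) * (real n - real m) / real m))
      < real m / real n * (real n / r)"
    using n_pos m_eq r1 by (intro mult_strict_left_mono) auto
  also have "\<dots> = r"
    using n_pos r1 m_eq by (simp add: field_simps power2_eq_square)
  finally show ?thesis
    unfolding delta_def r_def .
qed

lemma balancing_angle:
  fixes a b r \<theta> :: real
  assumes "a < r" and "b < r" and "0 \<le> \<theta>" and "\<theta> \<le> pi / 2"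
    and cos_double: "cos (2 * \<theta>) = (a - b) / (2 * r - a - b)"
  shows "0 < cos \<theta>" and "0 < sin \<theta>"
    and "(cos \<theta>)\<^sup>2 * a + (sin \<theta>)\<^sup>2 * r = (r\<^sup>2 - a * b) / (2 * r - a - b)"
    and "(cos \<theta>)\<^sup>2 * r + (sin \<theta>)\<^sup>2 * b = (r\<^sup>2 - a * b) / (2 * r - a - b)"
proof -
  define D where "D = 2 * r - a - b"
  have D_pos: "0 < D"
    unfolding D_def using assms(1,2) by simp
  have cos_sq: "(cos \<theta>)\<^sup>2 = (r - b) / D"
    using cos_double D_pos unfolding cos_double_cos D_def by (simp add: field_simps)
  have sin_sq: "(sin \<theta>)\<^sup>2 = (r - a) / D"
    using cos_sq D_pos unfolding sin_squared_eq D_def by (simp add: field_simps)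
  have "0 \<le> cos \<theta>" and "0 \<le> sin \<theta>"
    using assms(3,4) by (auto intro!: cos_ge_zero sin_ge_zero)
  moreover have "cos \<theta> \<noteq> 0" and "sin \<theta> \<noteq> 0"
    using cos_sq sin_sq D_pos assms(1,2) by auto
  ultimately show "0 < cos \<theta>" and "0 < sin \<theta>"
    by simp_all
  show "(cos \<theta>)\<^sup>2 * a + (sin \<theta>)\<^sup>2 * r = (r\<^sup>2 - a * b) / (2 * r - a - b)"
    and "(cos \<theta>)\<^sup>2 * r + (sin \<theta>)\<^sup>2 * b = (r\<^sup>2 - a * b) / (2 * r - a - b)"
    unfolding cos_sq sin_sq D_def[symmetric] using D_pos by (simp_all add: field_simps power2_eq_square)
qed

section \<open>Gram matrices under diagonal scaling\<close>

lemma diag_mat_mult_entry [simp]: "(diag_mat t ** A) $ x $ y = t $ x * A $ x $ y"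
  by (simp add: matrix_matrix_mult_def diag_mat_def if_distrib[of "\<lambda>z. z * _"] cong: if_cong)

lemma mult_diag_mat_entry [simp]: "(A ** diag_mat t) $ x $ y = A $ x $ y * t $ y"
  by (simp add: matrix_matrix_mult_def diag_mat_def if_distrib[of "\<lambda>z. _ * z"] cong: if_cong)

lemma column_scaleR_mult_diag_mat:
  "column x (c *\<^sub>R (Y ** diag_mat t)) = (c * t $ x) *\<^sub>R column x (Y :: real^'n^'m)"
  by (simp add: vec_eq_iff column_def)

lemma gram_scaleR_mult_diag_mat_entry:
  fixes Y :: "real^'n^'m"
  shows "(transpose (c *\<^sub>R (Y ** diag_mat t)) ** (c *\<^sub>R (Y ** diag_mat t))) $ x $ y
           = c\<^sup>2 * t $ x * t $ y * (transpose Y ** Y) $ x $ y"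
  by (simp add: matrix_mult_transpose_dot_column column_scaleR_mult_diag_mat power2_eq_square mult_ac)

lemma mat_abs_gram_scaleR_mult_diag_mat:
  fixes Y :: "real^'n^'m" and c :: real
  assumes "\<And>x. 0 \<le> t $ x" and "mat_abs (transpose Y ** Y) *v (t * t) = \<mu> *\<^sub>R 1"
  defines "U \<equiv> c *\<^sub>R (Y ** diag_mat t)"
  shows "mat_abs (transpose U ** U) *v t = (c\<^sup>2 * \<mu>) *\<^sub>R t"
proof (intro vec_eq_iff[THEN iffD2] allI)
  fix x
  have "\<mu> = (\<Sum>y\<in>UNIV. \<bar>(transpose Y ** Y) $ x $ y\<bar> * (t $ y * t $ y))"
    using assms(2) by (simp add: vec_eq_iff matrix_vector_mult_def mat_abs_def)
  then show "(mat_abs (transpose U ** U) *v t) $ x = ((c\<^sup>2 * \<mu>) *\<^sub>R t) $ x"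
    using assms(1)
    by (simp add: U_def matrix_vector_mult_def mat_abs_def gram_scaleR_mult_diag_mat_entry
        abs_mult sum_distrib_left mult_ac)
qed

lemma mult_diag_mat_mult_entry [simp]:
  "(A ** diag_mat s ** B) $ x $ i = (\<Sum>y\<in>UNIV. A $ x $ y * s $ y * B $ y $ i)"
  by (simp add: matrix_matrix_mult_def[of "A ** diag_mat s"])

lemma diag_mat_sgn_gram_scaleR_mult_diag_mat:
  fixes Y :: "real^'n^'m" and c :: real
  assumes "\<And>x. 0 < t $ x" and "c \<noteq> 0"
    and "mat_sgn (transpose Y ** Y) ** diag_mat (t * t) ** transpose Y = \<mu> *\<^sub>R transpose Y"
  defines "U \<equiv> c *\<^sub>R (Y ** diag_mat t)"
  shows "diag_mat t ** mat_sgn (transpose U ** U) ** diag_mat t ** transpose U = \<mu> *\<^sub>R transpose U"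
proof (intro vec_eq_iff[THEN iffD2] allI)
  fix x i
  define G where "G = transpose Y ** Y"
  have sgn_eq: "mat_sgn (transpose U ** U) = mat_sgn G"
  proof -
    have "sgn (c\<^sup>2) = 1"
      using assms(2) by (simp add: sgn_if)
    moreover have "sgn (t $ y) = 1" for y
      using assms(1)[of y] by simp
    ultimately show ?thesis
      by (simp add: vec_eq_iff U_def G_def mat_sgn_def gram_scaleR_mult_diag_mat_entry sgn_mult)
  qed
  have U_entry: "U $ j $ y = c * (Y $ j $ y * t $ y)" for j y
    by (simp add: U_def)
  have "(mat_sgn G ** diag_mat (t * t) ** transpose Y) $ x $ i = \<mu> * Y $ i $ x"
    using assms(3) by (simp add: G_def transpose_def)
  then have row: "(\<Sum>y\<in>UNIV. sgn (G $ x $ y) * (t $ y * t $ y) * Y $ i $ y) = \<mu> * Y $ i $ x"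
    by (simp add: mat_sgn_def transpose_def)
  have "(diag_mat t ** mat_sgn (transpose U ** U) ** diag_mat t ** transpose U) $ x $ i
      = c * t $ x * (\<Sum>y\<in>UNIV. sgn (G $ x $ y) * (t $ y * t $ y) * Y $ i $ y)"
    unfolding sgn_eq
    by (simp add: U_entry mat_sgn_def transpose_def sum_distrib_left mult_ac)
  also have "\<dots> = (\<mu> *\<^sub>R transpose U) $ x $ i"
    unfolding row by (simp add: U_entry transpose_def mult_ac)
  finally show "(diag_mat t ** mat_sgn (transpose U ** U) ** diag_mat t ** transpose U) $ x $ i
      = (\<mu> *\<^sub>R transpose U) $ x $ i" .
qed

section \<open>The concatenation of two frames\<close>

definition frame_append :: "'a^'k^'m \<Rightarrow> 'a^'l^'m \<Rightarrow> 'a^('k::finite + 'l::finite)^'m" where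
  "frame_append V W = (\<chi> i x. case x of Inl p \<Rightarrow> V $ i $ p | Inr q \<Rightarrow> W $ i $ q)"

definition block_vector :: "'a \<Rightarrow> 'a \<Rightarrow> 'a^('k::finite + 'l::finite)" where
  "block_vector a b = (\<chi> x. case x of Inl _ \<Rightarrow> a | Inr _ \<Rightarrow> b)"

lemma block_vector_same: "block_vector c c = (c :: real) *\<^sub>R 1"
  by (simp add: vec_eq_iff block_vector_def split: sum.split)

lemma frame_append_component [simp]:
  "frame_append V W $ i $ Inl p = V $ i $ p"
  "frame_append V W $ i $ Inr q = W $ i $ q"
  by (simp_all add: frame_append_def)

lemma column_frame_append [simp]:
  "column (Inl p) (frame_append V W) = column p V"
  "column (Inr q) (frame_append V W) = column q W"
  by (simp_all add: frame_append_def column_def)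

lemma block_vector_component [simp]:
  "block_vector a b $ Inl p = a"
  "block_vector a b $ Inr q = b"
  by (simp_all add: block_vector_def)

lemma sum_UNIV_Plus:
  fixes f :: "'k::finite + 'l::finite \<Rightarrow> 'a::comm_monoid_add"
  shows "(\<Sum>x\<in>UNIV. f x) = (\<Sum>p\<in>UNIV. f (Inl p)) + (\<Sum>q\<in>UNIV. f (Inr q))"
  using sum.Plus[of "UNIV :: 'k set" "UNIV :: 'l set" f] by (simp add: o_def)

lemma mat_abs_gram_frame_append_mult_block_vector:
  fixes V :: "real^'k^'m" and W :: "real^'l^'m"
  defines "Y \<equiv> frame_append V W"
  shows "(mat_abs (transpose Y ** Y) *v block_vector a b) $ x
           = a * (\<Sum>p\<in>UNIV. \<bar>column x Y \<bullet> column p V\<bar>) + b * (\<Sum>q\<in>UNIV. \<bar>column x Y \<bullet> column q W\<bar>)"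
  by (simp add: Y_def matrix_vector_mult_def mat_abs_def matrix_mult_transpose_dot_column
      sum_UNIV_Plus sum_distrib_left mult_ac)

lemma mat_sgn_gram_frame_append_block_vector:
  fixes V :: "real^'k^'m" and W :: "real^'l^'m"
  defines "Y \<equiv> frame_append V W"
  assumes "\<And>x. sign_balanced (column x Y) V" and "\<And>x. sign_balanced (column x Y) W"
  shows "mat_sgn (transpose Y ** Y) ** diag_mat (block_vector a b) ** transpose Y
           = diag_mat (mat_abs (transpose Y ** Y) *v block_vector a b) ** transpose Y"
proof (intro vec_eq_iff[THEN iffD2] allI)
  fix x i
  have balanced_component: "(\<Sum>q\<in>UNIV. sgn (column x Y \<bullet> column q X) * X $ i $ q)
      = (\<Sum>q\<in>UNIV. \<bar>column x Y \<bullet> column q X\<bar>) * Y $ i $ x"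
    if "sign_balanced (column x Y) X" for X :: "real^'n^'m"
    using that unfolding sign_balanced_def vec_eq_iff by (simp add: column_def)
  have "(mat_sgn (transpose Y ** Y) ** diag_mat (block_vector a b) ** transpose Y) $ x $ i
      = a * (\<Sum>p\<in>UNIV. sgn (column x Y \<bullet> column p V) * V $ i $ p)
        + b * (\<Sum>q\<in>UNIV. sgn (column x Y \<bullet> column q W) * W $ i $ q)"
    unfolding mult_diag_mat_mult_entry matrix_mult_transpose_dot_column
    by (simp add: Y_def mat_sgn_def transpose_def sum_UNIV_Plus sum_distrib_left mult_ac)
  also have "\<dots> = a * ((\<Sum>p\<in>UNIV. \<bar>column x Y \<bullet> column p V\<bar>) * Y $ i $ x)
        + b * ((\<Sum>q\<in>UNIV. \<bar>column x Y \<bullet> column q W\<bar>) * Y $ i $ x)"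
    by (simp only: balanced_component assms(2,3))
  also have "\<dots> = (mat_abs (transpose Y ** Y) *v block_vector a b) $ x * Y $ i $ x"
    unfolding Y_def mat_abs_gram_frame_append_mult_block_vector by (simp add: algebra_simps)
  also have "\<dots> = (diag_mat (mat_abs (transpose Y ** Y) *v block_vector a b) ** transpose Y) $ x $ i"
    by (simp add: transpose_def)
  finally show "(mat_sgn (transpose Y ** Y) ** diag_mat (block_vector a b) ** transpose Y) $ x $ i
      = (diag_mat (mat_abs (transpose Y ** Y) *v block_vector a b) ** transpose Y) $ x $ i" .
qed

lemma mat_abs_gram_frame_append_ETF:
  fixes V :: "real^'k^'m" and W :: "real^'l^'m"
  assumes "is_ETF V" and "is_ETF W" and "mutually_unbiased V W"
  shows "mat_abs (transpose (frame_append V W) ** frame_append V W)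
           *v block_vector (a / real CARD('k)) (b / real CARD('l))
         = (1 / real CARD('m)) *\<^sub>R block_vector
             (a * delta CARD('m) CARD('k) + b * sqrt (real CARD('m)))
             (a * sqrt (real CARD('m)) + b * delta CARD('m) CARD('l))"
proof (intro vec_eq_iff[THEN iffD2] allI)
  have WV: "mutually_unbiased W V"
    using assms(3) by (rule mutually_unbiased_commute)
  have inverse_sqrt: "x / sqrt (real CARD('m)) = x * sqrt (real CARD('m)) / real CARD('m)" for x
    by (simp add: field_simps)
  fix x :: "'k + 'l"
  show "(mat_abs (transpose (frame_append V W) ** frame_append V W)
           *v block_vector (a / real CARD('k)) (b / real CARD('l))) $ x
        = ((1 / real CARD('m)) *\<^sub>R block_vector
             (a * delta CARD('m) CARD('k) + b * sqrt (real CARD('m)))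
             (a * sqrt (real CARD('m)) + b * delta CARD('m) CARD('l))) $ x"
    by (cases x) (simp_all add: mat_abs_gram_frame_append_mult_block_vector ETF_sum_abs_inner assms
        mutually_unbiased_sum_abs_inner[OF assms] mutually_unbiased_sum_abs_inner[OF assms(2,1) WV]
        inverse_sqrt field_simps)
qed

lemma frame_append_ETF_sign_balanced:
  fixes V :: "real^'k^'m" and W :: "real^'l^'m"
  assumes "is_ETF V" and "is_ETF W" and "mutually_unbiased V W"
  shows "sign_balanced (column x (frame_append V W)) V"
    and "sign_balanced (column x (frame_append V W)) W"
  by (cases x; simp add: ETF_sign_balanced assms mutually_unbiased_sign_balanced[OF assms]
      mutually_unbiased_sign_balanced[OF assms(2,1) mutually_unbiased_commute[OF assms(3)]])+

lemma U_theta_eq_frame_append: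
  "U_theta \<theta> V W = sqrt (real CARD('m)) *\<^sub>R (frame_append V W ** diag_mat (t_theta \<theta>))"
  for V :: "real^'k^'m" and W :: "real^'l^'m"
proof (intro vec_eq_iff[THEN iffD2] allI)
  fix i x
  show "U_theta \<theta> V W $ i $ x
      = (sqrt (real CARD('m)) *\<^sub>R (frame_append V W ** diag_mat (t_theta \<theta>))) $ i $ x"
    by (cases x) (simp_all add: U_theta_def t_theta_def real_sqrt_divide)
qed

lemma t_theta_times_t_theta:
  "(t_theta \<theta> :: real^('k::finite + 'l::finite)) * t_theta \<theta>
     = block_vector ((cos \<theta>)\<^sup>2 / real CARD('k)) ((sin \<theta>)\<^sup>2 / real CARD('l))"
  by (simp add: vec_eq_iff t_theta_def block_vector_def power2_eq_square split: sum.split)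

theorem proposition1:
  fixes V :: "real^'k^'m" and W :: "real^'l^'m" and \<theta> :: real
  assumes "CARD('m) \<ge> 2"
    and "is_ETF V" and "is_ETF W"
    and "mutually_unbiased V W"
    and "0 \<le> \<theta>" and "\<theta> \<le> pi / 2"
    and "cos (2 * \<theta>) =
           (delta CARD('m) CARD('k) - delta CARD('m) CARD('l)) /
           (2 * sqrt (real CARD('m)) - delta CARD('m) CARD('k) - delta CARD('m) CARD('l))"
  shows "mat_abs (transpose (U_theta \<theta> V W) ** U_theta \<theta> V W) *v t_theta \<theta>
           = gamma CARD('m) CARD('k) CARD('l) *\<^sub>R (t_theta \<theta> :: real^('k + 'l))
       \<and> diag_mat (t_theta \<theta>) ** mat_sgn (transpose (U_theta \<theta> V W) ** U_theta \<theta> V W)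
           ** diag_mat (t_theta \<theta>) ** transpose (U_theta \<theta> V W)
           = (gamma CARD('m) CARD('k) CARD('l) / real CARD('m)) *\<^sub>R transpose (U_theta \<theta> V W)"
proof -
  let ?m = "real CARD('m)" and ?r = "sqrt (real CARD('m))"
  let ?\<gamma> = "gamma CARD('m) CARD('k) CARD('l)"
  let ?Y = "frame_append V W" and ?t = "t_theta \<theta> :: real^('k + 'l)"
  have "delta CARD('m) CARD('k) < ?r" and "delta CARD('m) CARD('l) < ?r"
    using assms(1) ETF_card_le[OF assms(2)] ETF_card_le[OF assms(3)]
    by (simp_all add: delta_less_sqrt)
  note angle = balancing_angle[OF this assms(5,6,7)]
  have rows: "mat_abs (transpose ?Y ** ?Y) *v (?t * ?t) = (?\<gamma> / ?m) *\<^sub>R 1"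
    unfolding t_theta_times_t_theta mat_abs_gram_frame_append_ETF[OF assms(2-4)] angle(3,4)
      block_vector_same
    by (simp add: gamma_def)
  have sgn_rows: "mat_sgn (transpose ?Y ** ?Y) ** diag_mat (?t * ?t) ** transpose ?Y
      = (?\<gamma> / ?m) *\<^sub>R transpose ?Y"
    using rows unfolding t_theta_times_t_theta
      mat_sgn_gram_frame_append_block_vector[OF frame_append_ETF_sign_balanced[OF assms(2-4)]]
    by (simp add: vec_eq_iff)
  have t_pos: "0 < ?t $ x" for x
    using angle(1,2) by (simp add: t_theta_def split: sum.split)
  show ?thesis
    unfolding U_theta_eq_frame_append
    using mat_abs_gram_scaleR_mult_diag_mat[OF less_imp_le[OF t_pos] rows, of ?r]
      diag_mat_sgn_gram_scaleR_mult_diag_mat[OF t_pos _ sgn_rows, of ?r]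
    by simp
qed

end
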